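(* Consider a quantum data-syndrome code with $n$ qubits and $m$ measurement bits, set $N=2n+m$, and consider noise described by a set of channel supports $\Gamma\subseteq 2^{[N]}$ with channel distributions $(P_\gamma)_{\gamma\in\Gamma}$ and total error distribution $P$. Assume that for all $\gamma_1,\gamma_2\in\Gamma$ one has $\gamma_1\cup\gamma_2\in\Delta^{D}$, and assume $P_\gamma(0)>\tfrac12$ for all $\gamma\in\Gamma$. Then the total error distribution $P$ is identifiable from the syndrome statistics: if $(P'_\gamma)_{\gamma\in\Gamma}$ is any other family of channel distributions for the same $\Gamma$ with $P'_\gamma(0)>\tfrac12$ for all $\gamma$, whose total error distribution $P'$ induces the same distribution of syndromes as $P$, then $P'=P$.
   Context: Phase space representation: a Pauli operator on $n$ qubits (modulo phases) $X^{x_1}Z^{z_1}\otimes\cdots\otimes X^{x_n}Z^{z_n}$ is identified with $(x_1,\dots,x_n,z_1,\dots,z_n)\in\mathbb F_2^{2n}$. For $v=(x,z)\in\mathbb F_2^{2n}$ write $\overline v=(z,x)$ (swap of $X$- and $Z$-bits); two Pauli vectors $u,v$ commute iff $\overline u\cdot v=0$ (mod 2). A quantum data-syndrome code is given by pairwise commuting stabilizer generators $g^{(1)},\dots,g^{(l)}\in\mathbb F_2^{2n}$ (generating a stabilizer group not containing $-I$) and a classical code with generator matrix $G_C=[I_l\ A]\in\mathbb F_2^{l\times m}$, $A\in\mathbb F_2^{l\times(m-l)}$; for $i\in[m]$ let $f^{(i)}=\sum_{j=1}^l (G_C)_{j,i}\,g^{(j)}\in\mathbb F_2^{2n}$ (so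 $f^{(i)}=g^{(i)}$ for $i\le l$). Errors are vectors $e=(e_d,e_m)\in\mathbb F_2^{2n}\times\mathbb F_2^m=\mathbb F_2^N$, and the syndrome of $e$ is $\mathrm{syn}(e)\in\mathbb F_2^m$ with $\mathrm{syn}(e)_i=f^{(i)}\cdot\overline{e_d}+(e_m)_i$ (mod 2). Vectors in $\mathbb F_2^N$ are identified with their support sets in $[N]$. A noise model consists of a set $\Gamma\subseteq 2^{[N]}$ and, for each $\gamma\in\Gamma$, a probability distribution $P_\gamma$ on $\mathbb F_2^N$ with $P_\gamma(e)=0$ unless $\mathrm{supp}(e)\subseteq\gamma$; the total error distribution $P$ is the distribution of $\sum_{\gamma\in\Gamma}e_\gamma$ (sum in $\mathbb F_2^N$) where the $e_\gamma\sim P_\gamma$ are independent (the Boolean convolution of the $P_\gamma$). The syndrome statistics is the distribution of $\mathrm{syn}(e)$ for $e\sim P$. Define $\Delta^{D}=\{\gamma\subseteq[N]: \mathrm{syn}(e)\neq 0 \text{ for all nonzero } e\in\mathbb F_2^N \text{ with } \mathrm{supp}(e)\subseteq\gamma\}$. *)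

theory Defs
  imports Complex_Main "HOL-Library.FuncSet"
begin

(* Conventions: F_2-vectors are represented by their support sets of (0-based) indices.
   Pauli vector in F_2^{2n}: indices 0..n-1 are the X-bits, n..2n-1 the Z-bits.
   Error vector in F_2^N, N = 2n+m: indices 0..2n-1 data part e_d, index 2n+i is (e_m)_i.
   Vector addition in F_2 is symmetric difference. *)

definition swapXZ :: "nat \<Rightarrow> nat \<Rightarrow> nat" where
  "swapXZ n k = (if k < n then k + n else k - n)"

(* symplectic-type product  bar(u) . v  (mod 2), as a boolean (True = 1) ;
   only indices < 2n are taken into account *)
definition sympl :: "nat \<Rightarrow> nat set \<Rightarrow> nat set \<Rightarrow> bool" where
  "sympl n u v = odd (card {k \<in> {0..<2*n}. k \<in> v \<and> swapXZ n k \<in> u})"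

definition xorsum :: "'b set \<Rightarrow> ('b \<Rightarrow> 'a set) \<Rightarrow> 'a set" where
  "xorsum I h = {k. odd (card {i \<in> I. k \<in> h i})}"

(* f^(i) = sum_j (G_C)_{j,i} g^(j),  G_C = [I_l A],  A :: l x (m-l) over F_2 (True = 1) *)
definition fvec :: "nat \<Rightarrow> (nat \<Rightarrow> nat set) \<Rightarrow> (nat \<Rightarrow> nat \<Rightarrow> bool) \<Rightarrow> nat \<Rightarrow> nat set" where
  "fvec l g A i = xorsum {j. j < l \<and> (if i < l then j = i else A j (i - l))} g"

definition syn :: "nat \<Rightarrow> nat \<Rightarrow> nat \<Rightarrow> (nat \<Rightarrow> nat set) \<Rightarrow> (nat \<Rightarrow> nat \<Rightarrow> bool)
                   \<Rightarrow> nat set \<Rightarrow> nat set" where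
  "syn n m l g A e = {i. i < m \<and> (sympl n e (fvec l g A i) \<noteq> (2*n + i \<in> e))}"

definition DeltaD :: "nat \<Rightarrow> nat \<Rightarrow> nat \<Rightarrow> (nat \<Rightarrow> nat set) \<Rightarrow> (nat \<Rightarrow> nat \<Rightarrow> bool)
                      \<Rightarrow> nat set set" where
  "DeltaD n m l g A = {\<gamma>. \<gamma> \<subseteq> {0..<2*n+m} \<and>
      (\<forall>e. e \<subseteq> \<gamma> \<longrightarrow> e \<noteq> {} \<longrightarrow> syn n m l g A e \<noteq> {})}"

(* quantum data-syndrome code data: generators g^(1..l) in F_2^{2n} pairwise commuting,
   classical generator matrix [I_l A] with l <= m *)
definition qds_code :: "nat \<Rightarrow> nat \<Rightarrow> nat \<Rightarrow> (nat \<Rightarrow> nat set) \<Rightarrow> (nat \<Rightarrow> nat \<Rightarrow> bool) \<Rightarrow> bool" where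
  "qds_code n m l g A \<longleftrightarrow> l \<le> m \<and> (\<forall>j<l. g j \<subseteq> {0..<2*n}) \<and>
      (\<forall>j<l. \<forall>j'<l. \<not> sympl n (g j) (g j'))"

definition channel_family :: "nat set set \<Rightarrow> (nat set \<Rightarrow> nat set \<Rightarrow> real) \<Rightarrow> bool" where
  "channel_family \<Gamma> P \<longleftrightarrow> (\<forall>\<gamma>\<in>\<Gamma>. (\<forall>e. 0 \<le> P \<gamma> e) \<and> (\<forall>e. \<not> e \<subseteq> \<gamma> \<longrightarrow> P \<gamma> e = 0)
      \<and> sum (P \<gamma>) (Pow \<gamma>) = 1)"

(* total error distribution: Boolean convolution of the independent channels *)
definition total_dist :: "nat set set \<Rightarrow> (nat set \<Rightarrow> nat set \<Rightarrow> real) \<Rightarrow> nat set \<Rightarrow> real" where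
  "total_dist \<Gamma> P e = (\<Sum>h \<in> PiE \<Gamma> Pow. if xorsum \<Gamma> h = e then (\<Prod>\<gamma>\<in>\<Gamma>. P \<gamma> (h \<gamma>)) else 0)"

definition syndrome_stat :: "nat \<Rightarrow> nat \<Rightarrow> nat \<Rightarrow> (nat \<Rightarrow> nat set) \<Rightarrow> (nat \<Rightarrow> nat \<Rightarrow> bool)
      \<Rightarrow> (nat set \<Rightarrow> real) \<Rightarrow> nat set \<Rightarrow> real" where
  "syndrome_stat n m l g A Q s = (\<Sum>e \<in> {e \<in> Pow {0..<2*n+m}. syn n m l g A e = s}. Q e)"

end

theory Submission
  imports Defs
begin

(* Work with the Walsh-Fourier transform on F_2^N, whose characters are
   walsh v e = (-1)^|v \<inter> e|.  The transform of the Boolean convolution P is the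
   product of the transforms of the channels P_\<gamma>; each factor is positive because
   P_\<gamma>(0) > 1/2, and depends on v only through v \<inter> \<gamma>.  So log of the transform of P
   is a sum of functions local to the \<gamma>, i.e. a combination of characters walsh T
   with T inside some \<gamma>.
   The syndrome statistics determine the transform of P at the points syn^T s.
   There the characters walsh T and walsh T' of two distinct such T, T' are
   orthogonal: their product is the character s \<mapsto> (-1)^|s \<inter> syn (T \<Delta> T')|, which
   is nontrivial because T \<Delta> T' lies in some \<gamma>1 \<union> \<gamma>2 \<in> Delta^D.  Hence the log
   transforms for P and P' have the same coefficients, so the transforms agree and
   P = P' by Fourier inversion. *)

lemma odd_card_sym_diff:
  assumes "finite A" "finite B"
  shows "odd (card (sym_diff A B)) \<longleftrightarrow> odd (card A) \<noteq> odd (card B)"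
proof -
  have "card (sym_diff A B) = card (A - B) + card (B - A)"
    using assms by (intro card_Un_disjoint) auto
  moreover have "card A = card (A \<inter> B) + card (A - B)" "card B = card (A \<inter> B) + card (B - A)"
    using assms by (metis card_Int_Diff Int_commute)+
  ultimately show ?thesis by presburger
qed

definition walsh :: "'a set \<Rightarrow> 'a set \<Rightarrow> real" where
  "walsh v e = (if odd (card (v \<inter> e)) then -1 else 1)"

lemma walsh_commute: "walsh v e = walsh e v"
  by (simp add: walsh_def Int_commute)

lemma walsh_empty [simp]: "walsh v {} = 1"
  by (simp add: walsh_def)

lemma walsh_Int_eq: "x \<subseteq> X \<Longrightarrow> walsh (v \<inter> X) x = walsh v x"
proof -
  assume "x \<subseteq> X"
  then have "v \<inter> X \<inter> x = v \<inter> x" by blast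
  then show ?thesis by (simp add: walsh_def)
qed

lemma walsh_sym_diff:
  assumes "finite a" "finite b"
  shows "walsh v (sym_diff a b) = walsh v a * walsh v b"
proof -
  have "v \<inter> sym_diff a b = sym_diff (v \<inter> a) (v \<inter> b)" by blast
  then show ?thesis
    using odd_card_sym_diff[of "v \<inter> a" "v \<inter> b"] assms by (simp add: walsh_def)
qed

lemma sum_walsh_Pow:
  assumes "finite X" "t \<subseteq> X"
  shows "(\<Sum>s\<in>Pow X. walsh s t) = (if t = {} then 2 ^ card X else 0)"
proof (cases "t = {}")
  case True
  then show ?thesis using assms by (simp add: card_Pow)
next
  case False
  then obtain k where k: "k \<in> t" by auto
  \<comment> \<open>flipping the coordinate \<open>k\<close> is an involution of \<open>Pow X\<close> reversing the sign of every term\<close>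
  have flip: "sym_diff (sym_diff s {k}) {k} = s" for s by blast
  have "(\<Sum>s\<in>Pow X. walsh s t) = (\<Sum>s\<in>Pow X. walsh (sym_diff s {k}) t)"
    by (rule sum.reindex_bij_witness[where i="\<lambda>s. sym_diff s {k}" and j="\<lambda>s. sym_diff s {k}"])
       (use k assms flip in auto)
  also have "\<dots> = (\<Sum>s\<in>Pow X. - walsh s t)"
  proof (rule sum.cong[OF refl])
    fix s assume "s \<in> Pow X"
    then have "finite s" using assms finite_subset by auto
    then show "walsh (sym_diff s {k}) t = - walsh s t"
      using k by (simp add: walsh_commute[of _ t] walsh_sym_diff) (simp add: walsh_def)
  qed
  finally show ?thesis using False by (simp add: sum_negf)
qed

definition walsh_transform :: "'a set \<Rightarrow> ('a set \<Rightarrow> real) \<Rightarrow> 'a set \<Rightarrow> real" where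
  "walsh_transform X f v = (\<Sum>x\<in>Pow X. f x * walsh v x)"

lemma walsh_transform_Int: "walsh_transform X f (v \<inter> X) = walsh_transform X f v"
  unfolding walsh_transform_def by (intro sum.cong refl) (simp add: walsh_Int_eq)

lemma walsh_inversion:
  assumes "finite X" "y \<subseteq> X"
  shows "(\<Sum>T\<in>Pow X. walsh_transform X f T * walsh T y) = 2 ^ card X * f y"
proof -
  have fin: "finite x" if "x \<in> Pow X" for x
    using that assms finite_subset by auto
  have "(\<Sum>T\<in>Pow X. walsh_transform X f T * walsh T y)
      = (\<Sum>T\<in>Pow X. \<Sum>x\<in>Pow X. f x * walsh T (sym_diff x y))"
    unfolding walsh_transform_def sum_distrib_right
    using fin assms(2) by (intro sum.cong refl) (simp add: walsh_sym_diff finite_subset[OF _ assms(1)])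
  also have "\<dots> = (\<Sum>x\<in>Pow X. f x * (\<Sum>T\<in>Pow X. walsh T (sym_diff x y)))"
    by (subst sum.swap) (simp add: sum_distrib_left)
  also have "\<dots> = (\<Sum>x\<in>Pow X. if x = y then 2 ^ card X * f x else 0)"
  proof (rule sum.cong[OF refl])
    fix x assume "x \<in> Pow X"
    then have "sym_diff x y \<subseteq> X" using assms by auto
    moreover have "sym_diff x y = {} \<longleftrightarrow> x = y" by blast
    ultimately show "f x * (\<Sum>T\<in>Pow X. walsh T (sym_diff x y)) = (if x = y then 2 ^ card X * f x else 0)"
      using sum_walsh_Pow[OF assms(1)] by auto
  qed
  also have "\<dots> = 2 ^ card X * f y" using assms by (simp add: sum.delta')
  finally show ?thesis .
qed

lemma walsh_transform_eqD:
  assumes "finite X" "walsh_transform X f = walsh_transform X f'" "y \<subseteq> X"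
  shows "f y = f' y"
  using walsh_inversion[OF assms(1,3), of f] walsh_inversion[OF assms(1,3), of f'] assms(2) by simp

lemma walsh_expansion_if_local:
  assumes "finite X" "\<And>v. f (v \<inter> X) = f v"
  shows "f v = (\<Sum>T\<in>Pow X. walsh_transform X f T / 2 ^ card X * walsh T v)"
proof -
  have "(\<Sum>T\<in>Pow X. walsh_transform X f T / 2 ^ card X * walsh T v)
      = (\<Sum>T\<in>Pow X. walsh_transform X f T * walsh T (v \<inter> X)) / 2 ^ card X"
    unfolding sum_divide_distrib
    by (intro sum.cong refl) (simp add: walsh_commute[of _ "v \<inter> X"] walsh_commute[of _ v] walsh_Int_eq)
  also have "\<dots> = f v"
    using walsh_inversion[OF assms(1), of "v \<inter> X" f] assms(2) by simp
  finally show ?thesis by simp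
qed

lemma sym_diff_hom_eq_odd_card_Int:
  assumes "finite U"
    and hom: "\<And>a b. a \<subseteq> U \<Longrightarrow> b \<subseteq> U \<Longrightarrow> L (sym_diff a b) \<longleftrightarrow> L a \<noteq> L b"
    and "e \<subseteq> U"
  shows "L e \<longleftrightarrow> odd (card ({k \<in> U. L {k}} \<inter> e))"
proof -
  have "finite e" using assms finite_subset by blast
  from this \<open>e \<subseteq> U\<close> show ?thesis
  proof (induction e rule: finite_induct)
    case empty
    show ?case using hom[of "{}" "{}"] by simp
  next
    case (insert k F)
    have "insert k F = sym_diff {k} F" using insert.hyps(2) by blast
    then have "L (insert k F) \<longleftrightarrow> L {k} \<noteq> L F" using hom[of "{k}" F] insert.prems by auto
    moreover have "{j \<in> U. L {j}} \<inter> insert k F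
        = (if L {k} then insert k ({j \<in> U. L {j}} \<inter> F) else {j \<in> U. L {j}} \<inter> F)"
      using insert.prems by auto
    ultimately show ?case using insert by auto
  qed
qed

lemma sympl_sym_diff_left: "sympl n (sym_diff u u') v \<longleftrightarrow> sympl n u v \<noteq> sympl n u' v"
proof -
  have "{k \<in> {0..<2*n}. k \<in> v \<and> swapXZ n k \<in> sym_diff u u'}
      = sym_diff {k \<in> {0..<2*n}. k \<in> v \<and> swapXZ n k \<in> u} {k \<in> {0..<2*n}. k \<in> v \<and> swapXZ n k \<in> u'}"
    by blast
  then show ?thesis unfolding sympl_def by (simp add: odd_card_sym_diff)
qed

lemma syn_sym_diff:
  "syn n m l g A (sym_diff e e') = sym_diff (syn n m l g A e) (syn n m l g A e')"
  unfolding syn_def sympl_sym_diff_left by blast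

lemma syn_subset: "syn n m l g A e \<subseteq> {0..<m}"
  by (auto simp: syn_def)

definition syn_transpose :: "nat \<Rightarrow> nat \<Rightarrow> nat \<Rightarrow> (nat \<Rightarrow> nat set) \<Rightarrow> (nat \<Rightarrow> nat \<Rightarrow> bool)
    \<Rightarrow> nat set \<Rightarrow> nat set" where
  "syn_transpose n m l g A s = {k \<in> {0..<2*n+m}. odd (card (s \<inter> syn n m l g A {k}))}"

lemma walsh_syn_eq_walsh_syn_transpose:
  assumes "e \<subseteq> {0..<2*n+m}"
  shows "walsh s (syn n m l g A e) = walsh (syn_transpose n m l g A s) e"
proof -
  have fin: "finite (syn n m l g A e)" for e
    using finite_subset[OF syn_subset] by blast
  have "s \<inter> syn n m l g A (sym_diff a b) = sym_diff (s \<inter> syn n m l g A a) (s \<inter> syn n m l g A b)" for a b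
    unfolding syn_sym_diff by blast
  then have "odd (card (s \<inter> syn n m l g A (sym_diff a b)))
      \<longleftrightarrow> odd (card (s \<inter> syn n m l g A a)) \<noteq> odd (card (s \<inter> syn n m l g A b))" for a b
    using fin by (simp add: odd_card_sym_diff)
  from sym_diff_hom_eq_odd_card_Int[OF _ this assms] show ?thesis
    by (simp add: walsh_def syn_transpose_def Int_commute)
qed

lemma sum_walsh_syn_transpose_eq_0:
  assumes "\<gamma> \<in> DeltaD n m l g A" "D \<subseteq> \<gamma>" "D \<noteq> {}"
  shows "(\<Sum>s\<in>Pow {0..<m}. walsh (syn_transpose n m l g A s) D) = 0"
proof -
  have "D \<subseteq> {0..<2*n+m}" "syn n m l g A D \<noteq> {}"
    using assms unfolding DeltaD_def by blast+
  then have "(\<Sum>s\<in>Pow {0..<m}. walsh (syn_transpose n m l g A s) D)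
      = (\<Sum>s\<in>Pow {0..<m}. walsh s (syn n m l g A D))"
    by (simp add: walsh_syn_eq_walsh_syn_transpose)
  also have "\<dots> = 0"
    using sum_walsh_Pow[OF finite_atLeastLessThan syn_subset] \<open>syn n m l g A D \<noteq> {}\<close> by simp
  finally show ?thesis .
qed

lemma walsh_transform_at_syn_transpose:
  "walsh_transform {0..<2*n+m} Q (syn_transpose n m l g A s)
     = walsh_transform {0..<m} (syndrome_stat n m l g A Q) s"
proof -
  have "walsh_transform {0..<m} (syndrome_stat n m l g A Q) s
      = (\<Sum>t\<in>Pow {0..<m}. \<Sum>e\<in>Pow {0..<2*n+m}. if syn n m l g A e = t then Q e * walsh s t else 0)"
    unfolding walsh_transform_def syndrome_stat_def sum_distrib_right
    by (rule sum.cong[OF refl]) (simp add: sum.inter_filter[symmetric] if_distrib cong: if_cong)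
  also have "\<dots> = (\<Sum>e\<in>Pow {0..<2*n+m}. Q e * walsh s (syn n m l g A e))"
    by (subst sum.swap) (intro sum.cong refl, simp add: sum.delta syn_subset)
  also have "\<dots> = walsh_transform {0..<2*n+m} Q (syn_transpose n m l g A s)"
    unfolding walsh_transform_def by (intro sum.cong refl) (simp add: walsh_syn_eq_walsh_syn_transpose)
  finally show ?thesis ..
qed

lemma xorsum_insert:
  assumes "finite I" "a \<notin> I"
  shows "xorsum (insert a I) h = sym_diff (h a) (xorsum I h)"
proof -
  have "odd (card {i \<in> insert a I. k \<in> h i}) \<longleftrightarrow> (k \<in> h a) \<noteq> odd (card {i \<in> I. k \<in> h i})" for k
  proof -
    have "{i \<in> insert a I. k \<in> h i} = (if k \<in> h a then insert a {i \<in> I. k \<in> h i} else {i \<in> I. k \<in> h i})"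
      by auto
    then show ?thesis using assms by auto
  qed
  then show ?thesis unfolding xorsum_def by blast
qed

lemma xorsum_subset: "xorsum I h \<subseteq> \<Union> (h ` I)"
proof
  fix k assume "k \<in> xorsum I h"
  then have "odd (card {i \<in> I. k \<in> h i})" unfolding xorsum_def by simp
  then have "{i \<in> I. k \<in> h i} \<noteq> {}" by (rule odd_card_imp_not_empty)
  then show "k \<in> \<Union> (h ` I)" by blast
qed

lemma walsh_xorsum:
  assumes "finite I" "\<And>i. i \<in> I \<Longrightarrow> finite (h i)"
  shows "walsh v (xorsum I h) = (\<Prod>i\<in>I. walsh v (h i))"
  using assms
proof (induction I rule: finite_induct)
  case empty
  then show ?case by (simp add: xorsum_def)
next
  case (insert a I)
  have "finite (xorsum I h)"
    using insert by (intro finite_subset[OF xorsum_subset]) auto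
  then have "walsh v (xorsum (insert a I) h) = walsh v (h a) * walsh v (xorsum I h)"
    unfolding xorsum_insert[OF insert.hyps] using insert.prems by (intro walsh_sym_diff) auto
  then show ?case using insert by simp
qed

lemma xorsum_PiE_subset:
  assumes "h \<in> PiE \<Gamma> Pow" "\<Gamma> \<subseteq> Pow U"
  shows "xorsum \<Gamma> h \<subseteq> U"
  using xorsum_subset[of \<Gamma> h] assms by (fastforce simp: PiE_iff)

lemma total_dist_eq_0:
  assumes "\<Gamma> \<subseteq> Pow U" "\<not> e \<subseteq> U"
  shows "total_dist \<Gamma> P e = 0"
  unfolding total_dist_def using xorsum_PiE_subset[OF _ assms(1)] assms(2)
  by (intro sum.neutral) auto

lemma walsh_transform_total_dist:
  assumes "finite U" "\<Gamma> \<subseteq> Pow U"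
  shows "walsh_transform U (total_dist \<Gamma> P) v = (\<Prod>\<gamma>\<in>\<Gamma>. walsh_transform \<gamma> (P \<gamma>) v)"
proof -
  have fin\<Gamma>: "finite \<Gamma>" using assms finite_subset by (metis finite_Pow_iff)
  have fin\<gamma>: "finite \<gamma>" if "\<gamma> \<in> \<Gamma>" for \<gamma> using that assms finite_subset by blast
  have "walsh_transform U (total_dist \<Gamma> P) v
      = (\<Sum>h\<in>PiE \<Gamma> Pow. \<Sum>e\<in>Pow U. if xorsum \<Gamma> h = e then (\<Prod>\<gamma>\<in>\<Gamma>. P \<gamma> (h \<gamma>)) * walsh v e else 0)"
    unfolding walsh_transform_def total_dist_def sum_distrib_right
    by (subst sum.swap) (intro sum.cong refl, simp)
  also have "\<dots> = (\<Sum>h\<in>PiE \<Gamma> Pow. (\<Prod>\<gamma>\<in>\<Gamma>. P \<gamma> (h \<gamma>)) * walsh v (xorsum \<Gamma> h))"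
    using xorsum_PiE_subset[OF _ assms(2)] assms(1) by (intro sum.cong refl) (simp add: sum.delta)
  also have "\<dots> = (\<Sum>h\<in>PiE \<Gamma> Pow. \<Prod>\<gamma>\<in>\<Gamma>. P \<gamma> (h \<gamma>) * walsh v (h \<gamma>))"
  proof (rule sum.cong[OF refl])
    fix h assume "h \<in> PiE \<Gamma> Pow"
    then have "finite (h \<gamma>)" if "\<gamma> \<in> \<Gamma>" for \<gamma>
      using that fin\<gamma> finite_subset by (fastforce simp: PiE_iff)
    then show "(\<Prod>\<gamma>\<in>\<Gamma>. P \<gamma> (h \<gamma>)) * walsh v (xorsum \<Gamma> h) = (\<Prod>\<gamma>\<in>\<Gamma>. P \<gamma> (h \<gamma>) * walsh v (h \<gamma>))"
      by (simp add: walsh_xorsum[OF fin\<Gamma>] prod.distrib)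
  qed
  also have "\<dots> = (\<Prod>\<gamma>\<in>\<Gamma>. walsh_transform \<gamma> (P \<gamma>) v)"
    unfolding walsh_transform_def using fin\<Gamma> fin\<gamma> by (simp add: prod_sum_PiE)
  finally show ?thesis .
qed

lemma walsh_transform_pos:
  fixes f :: "'a set \<Rightarrow> real"
  assumes nonneg: "\<And>e. 0 \<le> f e" and total: "sum f (Pow X) = 1" and "f {} > 1/2"
  shows "walsh_transform X f v > 0"
proof -
  have "finite (Pow X)" using total by (metis sum.infinite zero_neq_one)
  let ?R = "Pow X - {{}}"
  have split: "sum h (Pow X) = h {} + sum h ?R" for h :: "'a set \<Rightarrow> real"
    using \<open>finite (Pow X)\<close> by (subst sum.remove[of _ "{}"]) auto
  have "- (1 - f {}) = (\<Sum>x\<in>?R. - f x)"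
    using split[of f] total by (simp add: sum_negf)
  also have "\<dots> \<le> (\<Sum>x\<in>?R. f x * walsh v x)"
    using nonneg by (intro sum_mono) (simp add: walsh_def)
  finally show ?thesis
    using split[of "\<lambda>x. f x * walsh v x"] \<open>f {} > 1/2\<close> by (simp add: walsh_transform_def)
qed

lemma sum_local_walsh_expansion:
  assumes "finite \<Gamma>" "\<And>\<gamma>. \<gamma> \<in> \<Gamma> \<Longrightarrow> finite \<gamma>"
    and local_f: "\<And>\<gamma> v. \<gamma> \<in> \<Gamma> \<Longrightarrow> f \<gamma> (v \<inter> \<gamma>) = f \<gamma> v"
  obtains c where "\<And>v. (\<Sum>\<gamma>\<in>\<Gamma>. f \<gamma> v) = (\<Sum>T\<in>\<Union>(Pow ` \<Gamma>). c T * walsh T v)"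
proof
  define a where "a \<gamma> T = walsh_transform \<gamma> (f \<gamma>) T / 2 ^ card \<gamma>" for \<gamma> T
  have fin: "finite (\<Union>(Pow ` \<Gamma>))" using assms by simp
  fix v
  have "(\<Sum>\<gamma>\<in>\<Gamma>. f \<gamma> v) = (\<Sum>\<gamma>\<in>\<Gamma>. \<Sum>T\<in>Pow \<gamma>. a \<gamma> T * walsh T v)"
    unfolding a_def using assms by (intro sum.cong refl walsh_expansion_if_local) auto
  also have "\<dots> = (\<Sum>\<gamma>\<in>\<Gamma>. \<Sum>T\<in>\<Union>(Pow ` \<Gamma>). if T \<subseteq> \<gamma> then a \<gamma> T * walsh T v else 0)"
  proof (rule sum.cong[OF refl])
    fix \<gamma> assume "\<gamma> \<in> \<Gamma>"
    then have "{T \<in> \<Union>(Pow ` \<Gamma>). T \<subseteq> \<gamma>} = Pow \<gamma>" by auto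
    then show "(\<Sum>T\<in>Pow \<gamma>. a \<gamma> T * walsh T v)
        = (\<Sum>T\<in>\<Union>(Pow ` \<Gamma>). if T \<subseteq> \<gamma> then a \<gamma> T * walsh T v else 0)"
      using sum.inter_filter[OF fin, of "\<lambda>T. a \<gamma> T * walsh T v" "\<lambda>T. T \<subseteq> \<gamma>"] by simp
  qed
  also have "\<dots> = (\<Sum>T\<in>\<Union>(Pow ` \<Gamma>). (\<Sum>\<gamma>\<in>\<Gamma>. if T \<subseteq> \<gamma> then a \<gamma> T else 0) * walsh T v)"
    unfolding sum_distrib_right by (subst sum.swap) (intro sum.cong refl, simp)
  finally show "(\<Sum>\<gamma>\<in>\<Gamma>. f \<gamma> v)
      = (\<Sum>T\<in>\<Union>(Pow ` \<Gamma>). (\<Sum>\<gamma>\<in>\<Gamma>. if T \<subseteq> \<gamma> then a \<gamma> T else 0) * walsh T v)" .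
qed

lemma walsh_combination_coeff_eq_0:
  assumes "finite \<T>" "\<And>T. T \<in> \<T> \<Longrightarrow> finite T" "finite S" "S \<noteq> {}"
    and orth: "\<And>T T'. T \<in> \<T> \<Longrightarrow> T' \<in> \<T> \<Longrightarrow> T \<noteq> T' \<Longrightarrow> (\<Sum>s\<in>S. walsh (W s) (sym_diff T T')) = 0"
    and vanish: "\<And>s. s \<in> S \<Longrightarrow> (\<Sum>T\<in>\<T>. c T * walsh T (W s)) = 0"
    and "T0 \<in> \<T>"
  shows "c T0 = 0"
proof -
  have pairs: "(\<Sum>s\<in>S. walsh T (W s) * walsh T0 (W s)) = (if T = T0 then card S else 0)"
    if "T \<in> \<T>" for T
  proof -
    have "walsh T (W s) * walsh T0 (W s) = walsh (W s) (sym_diff T T0)" for s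
      using assms(2) that \<open>T0 \<in> \<T>\<close> by (simp add: walsh_commute[of _ "W s"] walsh_sym_diff)
    then show ?thesis using orth[OF that \<open>T0 \<in> \<T>\<close>] by simp
  qed
  have "0 = (\<Sum>s\<in>S. walsh T0 (W s) * (\<Sum>T\<in>\<T>. c T * walsh T (W s)))"
    using vanish by simp
  also have "\<dots> = (\<Sum>T\<in>\<T>. c T * (\<Sum>s\<in>S. walsh T (W s) * walsh T0 (W s)))"
    unfolding sum_distrib_left by (subst sum.swap) (simp add: ac_simps)
  also have "\<dots> = (\<Sum>T\<in>\<T>. if T = T0 then c T * card S else 0)"
    using pairs by (intro sum.cong refl) simp
  also have "\<dots> = c T0 * card S"
    using \<open>T0 \<in> \<T>\<close> assms(1) by simp
  finally show ?thesis using assms(3,4) by simp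
qed

lemma prod_local_eq_if_eq_on_separating_points:
  fixes F F' :: "'a set \<Rightarrow> 'a set \<Rightarrow> real"
  assumes "finite \<Gamma>" "\<And>\<gamma>. \<gamma> \<in> \<Gamma> \<Longrightarrow> finite \<gamma>"
    and pos: "\<And>\<gamma> v. \<gamma> \<in> \<Gamma> \<Longrightarrow> F \<gamma> v > 0" "\<And>\<gamma> v. \<gamma> \<in> \<Gamma> \<Longrightarrow> F' \<gamma> v > 0"
    and local_F: "\<And>\<gamma> v. \<gamma> \<in> \<Gamma> \<Longrightarrow> F \<gamma> (v \<inter> \<gamma>) = F \<gamma> v"
    and local_F': "\<And>\<gamma> v. \<gamma> \<in> \<Gamma> \<Longrightarrow> F' \<gamma> (v \<inter> \<gamma>) = F' \<gamma> v"
    and "finite S" "S \<noteq> {}"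
    and separating: "\<And>\<gamma>1 \<gamma>2 D. \<gamma>1 \<in> \<Gamma> \<Longrightarrow> \<gamma>2 \<in> \<Gamma> \<Longrightarrow> D \<subseteq> \<gamma>1 \<union> \<gamma>2 \<Longrightarrow> D \<noteq> {} \<Longrightarrow>
        (\<Sum>s\<in>S. walsh (W s) D) = 0"
    and eq: "\<And>s. s \<in> S \<Longrightarrow> (\<Prod>\<gamma>\<in>\<Gamma>. F \<gamma> (W s)) = (\<Prod>\<gamma>\<in>\<Gamma>. F' \<gamma> (W s))"
  shows "(\<Prod>\<gamma>\<in>\<Gamma>. F \<gamma> v) = (\<Prod>\<gamma>\<in>\<Gamma>. F' \<gamma> v)"
proof -
  define \<psi> where "\<psi> \<gamma> v = ln (F \<gamma> v) - ln (F' \<gamma> v)" for \<gamma> v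
  have log_ratio: "(\<Sum>\<gamma>\<in>\<Gamma>. \<psi> \<gamma> v) = ln (\<Prod>\<gamma>\<in>\<Gamma>. F \<gamma> v) - ln (\<Prod>\<gamma>\<in>\<Gamma>. F' \<gamma> v)" for v
    using pos by (simp add: \<psi>_def sum_subtractf ln_prod[OF assms(1)] less_imp_neq[symmetric])
  obtain c where c: "\<And>v. (\<Sum>\<gamma>\<in>\<Gamma>. \<psi> \<gamma> v) = (\<Sum>T\<in>\<Union>(Pow ` \<Gamma>). c T * walsh T v)"
    using sum_local_walsh_expansion[OF assms(1,2), of \<psi>] local_F local_F' by (auto simp: \<psi>_def)
  have "c T = 0" if "T \<in> \<Union>(Pow ` \<Gamma>)" for T
  proof (rule walsh_combination_coeff_eq_0[where W = W and S = S])
    show "finite (\<Union>(Pow ` \<Gamma>))" "\<And>T. T \<in> \<Union>(Pow ` \<Gamma>) \<Longrightarrow> finite T"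
      using assms(1,2) finite_subset by auto
    show "(\<Sum>s\<in>S. walsh (W s) (sym_diff T T')) = 0"
      if "T \<in> \<Union>(Pow ` \<Gamma>)" and "T' \<in> \<Union>(Pow ` \<Gamma>)" and "T \<noteq> T'" for T T'
    proof -
      obtain \<gamma>1 \<gamma>2 where "\<gamma>1 \<in> \<Gamma>" "\<gamma>2 \<in> \<Gamma>" "T \<subseteq> \<gamma>1" "T' \<subseteq> \<gamma>2"
        using \<open>T \<in> \<Union>(Pow ` \<Gamma>)\<close> \<open>T' \<in> \<Union>(Pow ` \<Gamma>)\<close> by auto
      moreover have "sym_diff T T' \<noteq> {}" using \<open>T \<noteq> T'\<close> by blast
      ultimately show ?thesis using separating[of \<gamma>1 \<gamma>2 "sym_diff T T'"] by blast
    qed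
    show "(\<Sum>T\<in>\<Union>(Pow ` \<Gamma>). c T * walsh T (W s)) = 0" if "s \<in> S" for s
      using c[of "W s"] log_ratio[of "W s"] eq[OF that] by simp
  qed (use assms(7,8) that in auto)
  then have "(\<Sum>\<gamma>\<in>\<Gamma>. \<psi> \<gamma> v) = 0" by (simp add: c)
  then show ?thesis
    using log_ratio pos by (simp add: prod_pos)
qed

lemma total_dist_eqI:
  assumes "finite U" "\<Gamma> \<subseteq> Pow U"
    and "\<And>v. (\<Prod>\<gamma>\<in>\<Gamma>. walsh_transform \<gamma> (P \<gamma>) v) = (\<Prod>\<gamma>\<in>\<Gamma>. walsh_transform \<gamma> (P' \<gamma>) v)"
  shows "total_dist \<Gamma> P = total_dist \<Gamma> P'"
proof
  fix e
  have "walsh_transform U (total_dist \<Gamma> P) = walsh_transform U (total_dist \<Gamma> P')"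
    using assms by (simp add: walsh_transform_total_dist fun_eq_iff)
  then show "total_dist \<Gamma> P e = total_dist \<Gamma> P' e"
    using walsh_transform_eqD[OF assms(1)] total_dist_eq_0[OF assms(2)] by (cases "e \<subseteq> U") auto
qed

theorem theorem10:
  fixes n m l :: nat and g :: "nat \<Rightarrow> nat set" and A :: "nat \<Rightarrow> nat \<Rightarrow> bool"
    and \<Gamma> :: "nat set set" and P P' :: "nat set \<Rightarrow> nat set \<Rightarrow> real"
  assumes code: "qds_code n m l g A"
    and Gamma: "\<Gamma> \<subseteq> Pow {0..<2*n+m}"
    and P: "channel_family \<Gamma> P"
    and union: "\<forall>\<gamma>1\<in>\<Gamma>. \<forall>\<gamma>2\<in>\<Gamma>. \<gamma>1 \<union> \<gamma>2 \<in> DeltaD n m l g A"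
    and P0: "\<forall>\<gamma>\<in>\<Gamma>. P \<gamma> {} > 1/2"
    and P': "channel_family \<Gamma> P'"
    and P'0: "\<forall>\<gamma>\<in>\<Gamma>. P' \<gamma> {} > 1/2"
    and same: "\<forall>s. syndrome_stat n m l g A (total_dist \<Gamma> P') s
                    = syndrome_stat n m l g A (total_dist \<Gamma> P) s"
  shows "total_dist \<Gamma> P' = total_dist \<Gamma> P"
proof (rule total_dist_eqI[OF finite_atLeastLessThan Gamma])
  have "finite \<Gamma>" and fin: "\<And>\<gamma>. \<gamma> \<in> \<Gamma> \<Longrightarrow> finite \<gamma>"
    using Gamma by (auto intro: finite_subset)
  have stat_eq: "syndrome_stat n m l g A (total_dist \<Gamma> P') = syndrome_stat n m l g A (total_dist \<Gamma> P)"
    using same by blast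
  show "(\<Prod>\<gamma>\<in>\<Gamma>. walsh_transform \<gamma> (P' \<gamma>) v) = (\<Prod>\<gamma>\<in>\<Gamma>. walsh_transform \<gamma> (P \<gamma>) v)" for v
  proof (rule prod_local_eq_if_eq_on_separating_points
      [where S = "Pow {0..<m}" and W = "syn_transpose n m l g A"])
    show "(\<Sum>s\<in>Pow {0..<m}. walsh (syn_transpose n m l g A s) D) = 0"
      if "\<gamma>1 \<in> \<Gamma>" "\<gamma>2 \<in> \<Gamma>" "D \<subseteq> \<gamma>1 \<union> \<gamma>2" "D \<noteq> {}" for \<gamma>1 \<gamma>2 D
      using union that by (intro sum_walsh_syn_transpose_eq_0[of "\<gamma>1 \<union> \<gamma>2"]) auto
    show "(\<Prod>\<gamma>\<in>\<Gamma>. walsh_transform \<gamma> (P' \<gamma>) (syn_transpose n m l g A s))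
        = (\<Prod>\<gamma>\<in>\<Gamma>. walsh_transform \<gamma> (P \<gamma>) (syn_transpose n m l g A s))" for s
      using arg_cong[OF stat_eq, of "\<lambda>Q. walsh_transform {0..<m} Q s"]
      by (simp add: walsh_transform_at_syn_transpose[symmetric]
          walsh_transform_total_dist[OF finite_atLeastLessThan Gamma])
  qed (use \<open>finite \<Gamma>\<close> fin P P0 P' P'0 in
      \<open>auto simp: walsh_transform_Int channel_family_def intro!: walsh_transform_pos\<close>)
qed

end
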